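(* Let $(X, \|\cdot\|)$ be a real reflexive Banach space. Let $(\|\cdot\|_n)_{n \in \mathbb{N}}$ be a sequence of strictly convex norms on $X$ for which there is a sequence $(s_n)$ of non-negative numbers with $s_n \to 0$ such that for all $n \in \mathbb{N}$ and $x \in X$ $$(1-s_n)\|x\|_n \le \|x\| \le (1+s_n)\|x\|_n.$$ Let $\{F_k\}_{k \in \mathbb{N}}$ be a countable family of convex sets such that for all $k, n \in \mathbb{N}$ the set $F_k$ is a contractive set with respect to $\|\cdot\|_n$. Assume $F = \bigcap_{k \in \mathbb{N}} F_k \neq \emptyset$. Then $F$ is a contractive subset of $X$ with respect to $\|\cdot\|$.
   Context: Given a norm $|\cdot|$ on $X$, a non-empty set $D \subset X$ is contractive with respect to $|\cdot|$ if there exists a mapping $P : X \to D$ with $P|_D = \mathrm{id}_D$ and $|Px - Py| \le |x-y|$ for all $x,y \in X$. *)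

theory Defs
  imports "HOL-Analysis.Analysis"
begin

definition reflexive_space :: "'a::banach itself \<Rightarrow> bool" where
  "reflexive_space _ \<longleftrightarrow>
     (\<forall>\<phi> :: ('a \<Rightarrow>\<^sub>L real) \<Rightarrow>\<^sub>L real. \<exists>x::'a. \<forall>f. blinfun_apply \<phi> f = blinfun_apply f x)"

definition is_norm :: "('a::real_vector \<Rightarrow> real) \<Rightarrow> bool" where
  "is_norm N \<longleftrightarrow>
     (\<forall>x. N x = 0 \<longleftrightarrow> x = 0) \<and>
     (\<forall>c x. N (c *\<^sub>R x) = \<bar>c\<bar> * N x) \<and>
     (\<forall>x y. N (x + y) \<le> N x + N y)"

definition strictly_convex_norm :: "('a::real_vector \<Rightarrow> real) \<Rightarrow> bool" where
  "strictly_convex_norm N \<longleftrightarrow> is_norm N \<and>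
     (\<forall>x y. N x = 1 \<and> N y = 1 \<and> x \<noteq> y \<longrightarrow> N ((1/2) *\<^sub>R (x + y)) < 1)"

definition contractive_set :: "('a::real_vector \<Rightarrow> real) \<Rightarrow> 'a set \<Rightarrow> bool" where
  "contractive_set N D \<longleftrightarrow> D \<noteq> {} \<and>
     (\<exists>P. (\<forall>x. P x \<in> D) \<and> (\<forall>x\<in>D. P x = x) \<and> (\<forall>x y. N (P x - P y) \<le> N (x - y)))"

end

theory Submission
  imports Defs
begin

text \<open>For a fixed strictly convex norm \<open>N\<close> equivalent to the given one, Zorn's lemma yields an
  \<open>N\<close>-nonexpansive map \<open>f\<close> fixing \<open>F = \<Inter>k. F\<^sub>k\<close> whose displacement \<open>N (f x - p)\<close> from a point
  \<open>p \<in> F\<close> is pointwise minimal. Averaging \<open>f\<close> with \<open>P\<^sub>k \<circ> f\<close>, for a nonexpansive retraction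
  \<open>P\<^sub>k\<close> onto \<open>F\<^sub>k\<close>, does not increase this displacement, so by strict convexity \<open>f\<close> already
  maps into every \<open>F\<^sub>k\<close>: \<open>F\<close> is \<open>N\<close>-contractive.

  Chains have lower bounds, and the \<open>\<parallel>\<cdot>\<parallel>\<^sub>n\<close>-retractions onto \<open>F\<close> have a limit, by weak
  compactness: in a reflexive space a uniformly bounded family of maps has a pointwise weak
  cluster point. Such a cluster point still fixes \<open>F\<close>, maps into the closed convex set \<open>F\<close>
  (Hahn-Banach separation) and satisfies every bound of the form \<open>p (q x - q y) \<le> c\<close> that holds
  eventually for a continuous sublinear \<open>p\<close> (Hahn-Banach norming functionals). Since
  \<open>(1 + s\<^sub>n) / (1 - s\<^sub>n) \<rightarrow> 1\<close>, the limit of the retractions is nonexpansive for \<open>\<parallel>\<cdot>\<parallel>\<close>.\<close>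

section \<open>Hahn-Banach for sublinear functionals\<close>

definition sublinear :: "('a::real_vector \<Rightarrow> real) \<Rightarrow> bool" where
  "sublinear p \<longleftrightarrow> (\<forall>x y. p (x + y) \<le> p x + p y) \<and> (\<forall>c x. c \<ge> 0 \<longrightarrow> p (c *\<^sub>R x) = c * p x)"

lemma sublinear_add: "sublinear p \<Longrightarrow> p (x + y) \<le> p x + p y"
  unfolding sublinear_def by blast

lemma sublinear_scaleR: "sublinear p \<Longrightarrow> c \<ge> 0 \<Longrightarrow> p (c *\<^sub>R x) = c * p x"
  unfolding sublinear_def by blast

lemma sublinear_zero: "sublinear p \<Longrightarrow> p 0 = 0"
  using sublinear_scaleR[of p 0 0] by simp

lemma sublinear_minus_le: "sublinear p \<Longrightarrow> - p (- x) \<le> p x"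
  using sublinear_add[of p x "- x"] sublinear_zero[of p] by simp

lemma sublinear_norm: "sublinear norm"
  unfolding sublinear_def by (simp add: norm_triangle_ineq)

lemma is_norm_norm: "is_norm norm"
  unfolding is_norm_def by (simp add: norm_triangle_ineq)

lemma is_norm_scaleR: "is_norm N \<Longrightarrow> N (c *\<^sub>R x) = \<bar>c\<bar> * N x"
  unfolding is_norm_def by blast

lemma is_norm_sublinear: "is_norm N \<Longrightarrow> sublinear N"
  unfolding is_norm_def sublinear_def by auto

lemma is_norm_minus: "is_norm N \<Longrightarrow> N (- x) = N x"
  unfolding is_norm_def by (metis abs_minus_cancel abs_one mult_1 scaleR_minus1_left)

lemma is_norm_nonneg: "is_norm N \<Longrightarrow> N x \<ge> 0"
  using sublinear_minus_le[OF is_norm_sublinear, of N x] is_norm_minus[of N x] by simp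

lemma Zorn_minimal:
  fixes A :: "'a::order set"
  assumes "A \<noteq> {}"
    and "\<And>C. C \<subseteq> A \<Longrightarrow> C \<noteq> {} \<Longrightarrow> Complete_Partial_Order.chain (\<le>) C \<Longrightarrow> \<exists>u\<in>A. \<forall>a\<in>C. u \<le> a"
  shows "\<exists>m\<in>A. \<forall>a\<in>A. a \<le> m \<longrightarrow> a = m"
proof -
  have po: "partial_order_on A (relation_of (\<ge>) A)"
    by (rule partial_order_on_relation_ofI) auto
  have "\<exists>m\<in>A. \<forall>a\<in>A. m \<ge> a \<longrightarrow> a = m"
  proof (rule predicate_Zorn[OF po])
    fix C assume C: "C \<in> Chains (relation_of (\<ge>) A)"
    show "\<exists>u\<in>A. \<forall>a\<in>C. a \<ge> u"
    proof (cases "C = {}")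
      case True
      then show ?thesis using assms(1) by blast
    next
      case False
      moreover have "Complete_Partial_Order.chain (\<le>) C"
        using C unfolding Chains_def relation_of_def chain_def by blast
      ultimately show ?thesis using assms(2) Chains_relation_of[OF C] by blast
    qed
  qed
  then show ?thesis by blast
qed

text \<open>Linear functionals below \<open>cone_inf p K\<close> are below \<open>p\<close> and at least \<open>r\<close> at \<open>w\<close> for every
  \<open>(w, r) \<in> K\<close>: this reduces Hahn-Banach with prescribed values to the mere existence of a linear
  minorant of a sublinear function.\<close>
definition cone_inf :: "('a::real_vector \<Rightarrow> real) \<Rightarrow> ('a \<times> real) set \<Rightarrow> 'a \<Rightarrow> real" where
  "cone_inf p K x = Inf ((\<lambda>(w, r). p (x + w) - r) ` K)"

locale sublinear_cone =
  fixes p :: "'a::real_vector \<Rightarrow> real" and K :: "('a \<times> real) set"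
  assumes sublinear: "sublinear p"
    and zero_mem: "(0, 0) \<in> K"
    and add_mem: "(w1, r1) \<in> K \<Longrightarrow> (w2, r2) \<in> K \<Longrightarrow> (w1 + w2, r1 + r2) \<in> K"
    and scale_mem: "c > 0 \<Longrightarrow> (w, r) \<in> K \<Longrightarrow> (c *\<^sub>R w, c * r) \<in> K"
    and below: "(w, r) \<in> K \<Longrightarrow> r \<le> p w"
begin

lemma bdd_below_cone: "bdd_below ((\<lambda>(w, r). p (x + w) - r) ` K)"
proof (rule bdd_belowI[where m = "- p (- x)"])
  fix v assume "v \<in> (\<lambda>(w, r). p (x + w) - r) ` K"
  then obtain w r where wr: "(w, r) \<in> K" "v = p (x + w) - r" by auto
  have "p w \<le> p (x + w) + p (- x)"
    using sublinear_add[OF sublinear, of "x + w" "- x"] by simp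
  with below[OF wr(1)] wr(2) show "- p (- x) \<le> v" by simp
qed

lemma cone_inf_le: "(w, r) \<in> K \<Longrightarrow> cone_inf p K x \<le> p (x + w) - r"
  unfolding cone_inf_def by (rule cInf_lower[OF _ bdd_below_cone]) force

lemma cone_inf_greatest: "(\<And>w r. (w, r) \<in> K \<Longrightarrow> a \<le> p (x + w) - r) \<Longrightarrow> a \<le> cone_inf p K x"
  unfolding cone_inf_def using zero_mem by (intro cInf_greatest) auto

lemma cone_inf_le_sublinear: "cone_inf p K x \<le> p x"
  using cone_inf_le[OF zero_mem, of x] by simp

lemma cone_inf_minus_le: "(w, r) \<in> K \<Longrightarrow> cone_inf p K (- w) \<le> - r"
  using cone_inf_le[of w r "- w"] sublinear_zero[OF sublinear] by simp

lemma cone_inf_add: "cone_inf p K (x + y) \<le> cone_inf p K x + cone_inf p K y"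
proof -
  have "cone_inf p K (x + y) - (p (y + w2) - r2) \<le> cone_inf p K x" if h2: "(w2, r2) \<in> K" for w2 r2
  proof (rule cone_inf_greatest)
    fix w1 r1 assume h1: "(w1, r1) \<in> K"
    have "cone_inf p K (x + y) \<le> p ((x + y) + (w1 + w2)) - (r1 + r2)"
      by (rule cone_inf_le[OF add_mem[OF h1 h2]])
    also have "p ((x + y) + (w1 + w2)) \<le> p (x + w1) + p (y + w2)"
      using sublinear_add[OF sublinear, of "x + w1" "y + w2"] by (simp add: algebra_simps)
    finally show "cone_inf p K (x + y) - (p (y + w2) - r2) \<le> p (x + w1) - r1" by simp
  qed
  then have "cone_inf p K (x + y) - cone_inf p K x \<le> cone_inf p K y"
    by (intro cone_inf_greatest) (simp add: algebra_simps)
  then show ?thesis by simp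
qed

lemma cone_inf_scaleR_le:
  assumes c: "c > 0"
  shows "cone_inf p K (c *\<^sub>R x) \<le> c * cone_inf p K x"
proof -
  have "cone_inf p K (c *\<^sub>R x) / c \<le> cone_inf p K x"
  proof (rule cone_inf_greatest)
    fix w r assume h: "(w, r) \<in> K"
    have "cone_inf p K (c *\<^sub>R x) \<le> p (c *\<^sub>R x + c *\<^sub>R w) - c * r"
      by (rule cone_inf_le[OF scale_mem[OF c h]])
    also have "\<dots> = c * (p (x + w) - r)"
      using sublinear_scaleR[OF sublinear, of c "x + w"] c by (simp add: scaleR_add_right algebra_simps)
    finally show "cone_inf p K (c *\<^sub>R x) / c \<le> p (x + w) - r"
      using c by (simp add: divide_le_eq mult.commute)
  qed
  then show ?thesis using c by (simp add: divide_le_eq mult.commute)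
qed

lemma sublinear_cone_inf: "sublinear (cone_inf p K)"
  unfolding sublinear_def
proof (intro conjI allI impI)
  fix x y show "cone_inf p K (x + y) \<le> cone_inf p K x + cone_inf p K y" by (rule cone_inf_add)
next
  fix c :: real and x assume c: "c \<ge> 0"
  show "cone_inf p K (c *\<^sub>R x) = c * cone_inf p K x"
  proof (cases "c = 0")
    case True
    have "cone_inf p K 0 \<le> 0" using cone_inf_le_sublinear[of 0] sublinear_zero[OF sublinear] by simp
    moreover have "0 \<le> cone_inf p K 0" by (rule cone_inf_greatest) (use below in auto)
    ultimately show ?thesis using True by simp
  next
    case False
    then have c: "c > 0" using c by simp
    have "cone_inf p K (inverse c *\<^sub>R (c *\<^sub>R x)) \<le> inverse c * cone_inf p K (c *\<^sub>R x)"
      using c by (intro cone_inf_scaleR_le) simp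
    then have "c * cone_inf p K x \<le> cone_inf p K (c *\<^sub>R x)"
      using c by (simp add: field_simps)
    with cone_inf_scaleR_le[OF c, of x] show ?thesis by simp
  qed
qed

end

lemma sublinear_cone_ray:
  assumes "sublinear p"
  shows "sublinear_cone p {(t *\<^sub>R z, t * p z) | t. t \<ge> 0}"
proof
  fix w1 r1 w2 r2
  assume "(w1, r1) \<in> {(t *\<^sub>R z, t * p z) | t. t \<ge> 0}" "(w2, r2) \<in> {(t *\<^sub>R z, t * p z) | t. t \<ge> 0}"
  then show "(w1 + w2, r1 + r2) \<in> {(t *\<^sub>R z, t * p z) | t. t \<ge> 0}"
    by clarsimp (metis add_nonneg_nonneg distrib_right scaleR_left_distrib)
next
  fix w r assume "(w, r) \<in> {(t *\<^sub>R z, t * p z) | t. t \<ge> 0}"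
  then show "r \<le> p w" using sublinear_scaleR[OF assms] by auto
qed (use assms in force)+

lemma sublinear_chain_Inf:
  fixes C :: "('a::real_vector \<Rightarrow> real) set"
  assumes C: "C \<noteq> {}" "Complete_Partial_Order.chain (\<le>) C"
    and sub: "\<And>a. a \<in> C \<Longrightarrow> sublinear a" and dom: "\<And>a. a \<in> C \<Longrightarrow> a \<le> p"
  shows "sublinear (\<lambda>x. INF a\<in>C. a x)" and "a \<in> C \<Longrightarrow> (\<lambda>x. INF a\<in>C. a x) \<le> a"
proof -
  define u where "u x = (INF a\<in>C. a x)" for x
  have bdd: "bdd_below ((\<lambda>a. a x) ` C)" for x
  proof (rule bdd_belowI[where m = "- p (- x)"])
    fix v assume "v \<in> (\<lambda>a. a x) ` C"
    then obtain a where a: "a \<in> C" "v = a x" by auto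
    then show "- p (- x) \<le> v"
      using sublinear_minus_le[OF sub[OF a(1)], of x] le_funD[OF dom[OF a(1)], of "- x"] by simp
  qed
  then have u_le: "u x \<le> a x" if "a \<in> C" for a x
    unfolding u_def using that by (intro cINF_lower) auto
  have le_u: "t \<le> u x" if "\<And>a. a \<in> C \<Longrightarrow> t \<le> a x" for t x
    unfolding u_def using that C(1) by (intro cINF_greatest) auto
  have "sublinear u"
    unfolding sublinear_def
  proof (intro conjI allI impI)
    fix x y
    have "u (x + y) \<le> a x + b y" if a: "a \<in> C" and b: "b \<in> C" for a b
    proof -
      have "a \<le> b \<or> b \<le> a" using C(2) a b by (simp add: chain_def)
      then obtain m where m: "m \<in> C" "m x \<le> a x" "m y \<le> b y"
        using a b by (auto simp: le_fun_def)
      have "u (x + y) \<le> m (x + y)" by (rule u_le[OF m(1)])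
      also have "\<dots> \<le> m x + m y" by (rule sublinear_add[OF sub[OF m(1)]])
      finally show ?thesis using m by simp
    qed
    then have "u (x + y) - b y \<le> u x" if b: "b \<in> C" for b
      using b by (intro le_u) (simp add: algebra_simps)
    then have "u (x + y) - u x \<le> u y" by (intro le_u) (simp add: algebra_simps)
    then show "u (x + y) \<le> u x + u y" by simp
  next
    fix c :: real and x assume "0 \<le> c"
    have "c * u x = (INF a\<in>C. c * a x)"
      unfolding u_def using continuous_at_Inf_mono[of "\<lambda>t. c * t" "(\<lambda>a. a x) ` C"] C(1) bdd \<open>0 \<le> c\<close>
      by (simp add: image_image mono_def mult_left_mono continuous_intros)
    also have "\<dots> = u (c *\<^sub>R x)"
      unfolding u_def using sublinear_scaleR[OF sub \<open>0 \<le> c\<close>] by simp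
    finally show "u (c *\<^sub>R x) = c * u x" ..
  qed
  then show "sublinear (\<lambda>x. INF a\<in>C. a x)" unfolding u_def[abs_def] .
  show "(\<lambda>x. INF a\<in>C. a x) \<le> a" if "a \<in> C" using u_le[OF that] unfolding u_def by (simp add: le_fun_def)
qed

lemma minimal_sublinear_linear:
  assumes m: "sublinear m"
    and minimal: "\<And>q. sublinear q \<Longrightarrow> q \<le> m \<Longrightarrow> q = m"
  shows "linear m"
proof -
  have minus: "m (- y) = - m y" for y
  proof -
    interpret sublinear_cone m "{(t *\<^sub>R y, t * m y) | t. t \<ge> 0}"
      by (rule sublinear_cone_ray[OF m])
    have ray: "(y, m y) \<in> {(t *\<^sub>R y, t * m y) | t. t \<ge> 0}"
      by (intro CollectI exI[of _ 1]) simp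
    have "cone_inf m {(t *\<^sub>R y, t * m y) | t. t \<ge> 0} = m"
      using minimal sublinear_cone_inf cone_inf_le_sublinear by (simp add: le_fun_def)
    then have "m (- y) \<le> - m y" using cone_inf_minus_le[OF ray] by simp
    with sublinear_minus_le[OF m, of y] show ?thesis by simp
  qed
  show ?thesis
  proof (rule linearI)
    fix x y
    have "m x \<le> m (x + y) + m (- y)" using sublinear_add[OF m, of "x + y" "- y"] by simp
    with minus[of y] sublinear_add[OF m, of x y] show "m (x + y) = m x + m y" by simp
  next
    fix c :: real and x
    show "m (c *\<^sub>R x) = c *\<^sub>R m x"
    proof (cases "c \<ge> 0")
      case True
      then show ?thesis using sublinear_scaleR[OF m] by simp
    next
      case False
      then have "m ((- c) *\<^sub>R x) = - c * m x" using sublinear_scaleR[OF m, of "- c"] by simp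
      then show ?thesis using minus[of "(- c) *\<^sub>R x"] by simp
    qed
  qed
qed

lemma linear_below_sublinear:
  assumes p: "sublinear p"
  shows "\<exists>g. linear g \<and> g \<le> p"
proof -
  define A where "A = {q. sublinear q \<and> q \<le> p}"
  have "\<exists>m\<in>A. \<forall>q\<in>A. q \<le> m \<longrightarrow> q = m"
  proof (rule Zorn_minimal)
    show "A \<noteq> {}" using p unfolding A_def by auto
  next
    fix C assume C: "C \<subseteq> A" "C \<noteq> {}" "Complete_Partial_Order.chain (\<le>) C"
    have CA: "sublinear a" "a \<le> p" if "a \<in> C" for a using C(1) that unfolding A_def by blast+
    define u where "u = (\<lambda>x. INF a\<in>C. a x)"
    have "sublinear u" and u_le: "\<And>a. a \<in> C \<Longrightarrow> u \<le> a"
      unfolding u_def using sublinear_chain_Inf[OF C(2,3) CA] by blast+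
    moreover have "u \<le> p" using C(2) u_le CA(2) by (blast intro: order_trans)
    ultimately show "\<exists>u\<in>A. \<forall>a\<in>C. u \<le> a" unfolding A_def by blast
  qed
  then obtain m where "m \<in> A" and "\<And>q. q \<in> A \<Longrightarrow> q \<le> m \<Longrightarrow> q = m" by blast
  then have "linear m" "m \<le> p"
    using minimal_sublinear_linear[of m] unfolding A_def by (auto intro: order_trans)
  then show ?thesis by blast
qed

lemma (in sublinear_cone) linear_below_above_cone:
  "\<exists>g. linear g \<and> g \<le> p \<and> (\<forall>(w, r)\<in>K. r \<le> g w)"
proof -
  obtain g where g: "linear g" "g \<le> cone_inf p K"
    using linear_below_sublinear[OF sublinear_cone_inf] by blast
  have "g \<le> p" using order_trans[OF le_funD[OF g(2)] cone_inf_le_sublinear] by (rule le_funI)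
  moreover have "r \<le> g w" if "(w, r) \<in> K" for w r
    using le_funD[OF g(2), of "- w"] cone_inf_minus_le[OF that] linear_neg[OF g(1), of w] by simp
  ultimately show ?thesis using g(1) by blast
qed

lemma bounded_linear_of_le_norm:
  fixes g :: "'a::real_normed_vector \<Rightarrow> real"
  assumes "linear g" "\<And>x. g x \<le> B * norm x"
  shows "bounded_linear g"
proof (rule bounded_linear_intro[where K = B])
  fix x
  have "- g x \<le> B * norm x" using assms(2)[of "- x"] linear_neg[OF assms(1)] by simp
  then show "norm (g x) \<le> norm x * B" using assms(2)[of x] by (simp add: abs_le_iff mult.commute)
qed (use linear_add[OF assms(1)] linear_scale[OF assms(1)] in auto)

lemma Hahn_Banach_norming:
  fixes p :: "'a::real_normed_vector \<Rightarrow> real"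
  assumes p: "sublinear p" and bounded: "\<And>x. p x \<le> B * norm x"
  shows "\<exists>g::'a \<Rightarrow>\<^sub>L real. (\<forall>x. g x \<le> p x) \<and> g z = p z"
proof -
  interpret sublinear_cone p "{(t *\<^sub>R z, t * p z) | t. t \<ge> 0}"
    by (rule sublinear_cone_ray[OF p])
  obtain g where g: "linear g" "g \<le> p" "\<forall>(w, r)\<in>{(t *\<^sub>R z, t * p z) | t. t \<ge> 0}. r \<le> g w"
    using linear_below_above_cone by blast
  have "p z \<le> g z" using g(3) by (force intro: exI[of _ 1])
  then have "g z = p z" using le_funD[OF g(2), of z] by simp
  moreover have "bounded_linear g"
    using g(1) le_funD[OF g(2)] bounded by (blast intro: bounded_linear_of_le_norm order_trans)
  ultimately show ?thesis
    using g(2) by (intro exI[of _ "Blinfun g"]) (simp add: bounded_linear_Blinfun_apply le_fun_def)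
qed

lemma sublinear_cone_norm_convex:
  fixes S :: "'a::real_normed_vector set"
  assumes S: "convex S" "S \<noteq> {}" and d: "\<And>y. y \<in> S \<Longrightarrow> d \<le> norm (z - y)"
  shows "sublinear_cone norm {(t *\<^sub>R (z - y), t * d) | t y. t \<ge> 0 \<and> y \<in> S}"
    (is "sublinear_cone norm ?K")
proof
  show "(0, 0) \<in> ?K" using S(2) by force
  show "sublinear norm" by (rule sublinear_norm)
next
  fix c :: real and w r assume c: "c > 0" and "(w, r) \<in> ?K"
  then obtain t y where "w = t *\<^sub>R (z - y)" "r = t * d" "t \<ge> 0" "y \<in> S" by blast
  then show "(c *\<^sub>R w, c * r) \<in> ?K"
    using c by (intro CollectI exI[of _ "c * t"] exI[of _ y]) auto
next
  fix w r assume "(w, r) \<in> ?K"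
  then obtain t y where "w = t *\<^sub>R (z - y)" "r = t * d" "t \<ge> 0" "y \<in> S" by blast
  then show "r \<le> norm w" using d by (simp add: mult_left_mono)
next
  fix w1 r1 w2 r2 assume "(w1, r1) \<in> ?K" "(w2, r2) \<in> ?K"
  then obtain t1 y1 t2 y2 where h: "w1 = t1 *\<^sub>R (z - y1)" "r1 = t1 * d" "t1 \<ge> 0" "y1 \<in> S"
    "w2 = t2 *\<^sub>R (z - y2)" "r2 = t2 * d" "t2 \<ge> 0" "y2 \<in> S" by blast
  show "(w1 + w2, r1 + r2) \<in> ?K"
  proof (cases "t1 + t2 = 0")
    case True
    then have "t1 = 0" "t2 = 0" using h by linarith+
    then show ?thesis using h S(2) by force
  next
    case False
    then have t: "t1 + t2 > 0" using h by simp
    define y where "y = (t1 / (t1 + t2)) *\<^sub>R y1 + (t2 / (t1 + t2)) *\<^sub>R y2"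
    have "y \<in> S" unfolding y_def using S(1) h t
      by (intro convexD) (auto simp: add_divide_distrib[symmetric])
    moreover have "(t1 + t2) *\<^sub>R y = t1 *\<^sub>R y1 + t2 *\<^sub>R y2"
      unfolding y_def using t by (simp add: scaleR_add_right)
    then have "(t1 + t2) *\<^sub>R (z - y) = w1 + w2"
      unfolding h by (simp add: scaleR_diff_right scaleR_add_left algebra_simps)
    moreover have "(t1 + t2) * d = r1 + r2" using h by (simp add: algebra_simps)
    ultimately show ?thesis using t by (metis (mono_tags, lifting) CollectI less_imp_le)
  qed
qed

lemma Hahn_Banach_separation:
  fixes S :: "'a::real_normed_vector set"
  assumes S: "convex S" "closed S" "S \<noteq> {}" and z: "z \<notin> S"
  shows "\<exists>g::'a \<Rightarrow>\<^sub>L real. \<exists>d>0. \<forall>y\<in>S. g y \<le> g z - d"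
proof -
  define d where "d = infdist z S"
  have "d > 0" unfolding d_def using infdist_pos_not_in_closed S z by blast
  have "d \<le> norm (z - y)" if "y \<in> S" for y
    unfolding d_def using infdist_le[OF that, of z] by (simp add: dist_norm)
  then obtain g where g: "linear g" "g \<le> norm"
    and above: "\<forall>(w, r)\<in>{(t *\<^sub>R (z - y), t * d) | t y. t \<ge> 0 \<and> y \<in> S}. r \<le> g w"
    using sublinear_cone.linear_below_above_cone[OF sublinear_cone_norm_convex[OF S(1,3)]] by blast
  have "bounded_linear g"
    using g(1) le_funD[OF g(2)] by (intro bounded_linear_of_le_norm[where B = 1]) auto
  moreover have "g y \<le> g z - d" if "y \<in> S" for y
  proof -
    have "d \<le> g (z - y)" using above that by (force intro: exI[of _ 1])
    then show ?thesis using linear_diff[OF g(1)] by simp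
  qed
  ultimately show ?thesis
    using \<open>d > 0\<close> by (intro exI[of _ "Blinfun g"] exI[of _ d]) (simp add: bounded_linear_Blinfun_apply)
qed

section \<open>Weak cluster points of bounded families of maps\<close>

lemma bounded_functions_cluster:
  fixes \<phi> :: "'i \<Rightarrow> 'b \<Rightarrow> real"
  assumes F: "F \<noteq> bot" and bounded: "eventually (\<lambda>i. \<forall>b. \<bar>\<phi> i b\<bar> \<le> M b) F"
  shows "\<exists>\<Phi>. (\<forall>b. \<bar>\<Phi> b\<bar> \<le> M b) \<and> (\<forall>S. closed S \<longrightarrow> eventually (\<lambda>i. \<phi> i \<in> S) F \<longrightarrow> \<Phi> \<in> S)"
proof -
  define Box where "Box = PiE UNIV (\<lambda>b. {- M b .. M b})"
  have "compactin (product_topology (\<lambda>_. euclidean) UNIV) Box"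
    unfolding Box_def by (subst compactin_PiE) auto
  then have "compact Box" by (simp add: euclidean_product_topology)
  moreover have "filtermap \<phi> F \<noteq> bot" using F by (simp add: filtermap_bot_iff)
  moreover have "eventually (\<lambda>\<Phi>. \<Phi> \<in> Box) (filtermap \<phi> F)"
    unfolding eventually_filtermap Box_def using bounded by (rule eventually_mono) (auto simp: abs_le_iff minus_le_iff)
  ultimately obtain \<Phi> where "\<Phi> \<in> Box" and cluster: "inf (nhds \<Phi>) (filtermap \<phi> F) \<noteq> bot"
    unfolding compact_filter by blast
  have "\<Phi> \<in> S" if "closed S" "eventually (\<lambda>i. \<phi> i \<in> S) F" for S
  proof (rule ccontr)
    assume "\<Phi> \<notin> S"
    then have "eventually (\<lambda>\<Psi>. \<Psi> \<in> - S) (nhds \<Phi>)"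
      using that(1) by (intro eventually_nhds_in_open) auto
    then have "eventually (\<lambda>_. False) (inf (nhds \<Phi>) (filtermap \<phi> F))"
      using that(2) unfolding eventually_inf eventually_filtermap
      by (intro exI[of _ "\<lambda>\<Psi>. \<Psi> \<in> - S"] exI[of _ "\<lambda>\<Psi>. \<Psi> \<in> S"]) auto
    then show False using cluster by (simp add: eventually_False)
  qed
  moreover have "\<bar>\<Phi> b\<bar> \<le> M b" for b
    using \<open>\<Phi> \<in> Box\<close> unfolding Box_def by (auto simp: PiE_iff abs_le_iff minus_le_iff)
  ultimately show ?thesis by blast
qed

text \<open>Every weak cluster point of \<open>u\<close> along \<open>F\<close> is adherent in this sense, and this is all that
  is used of weak convergence.\<close>
definition halfspace_adherent :: "('i \<Rightarrow> 'a::real_normed_vector) \<Rightarrow> 'i filter \<Rightarrow> 'a \<Rightarrow> bool" where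
  "halfspace_adherent u F v \<longleftrightarrow>
     (\<forall>(g::'a \<Rightarrow>\<^sub>L real) c. eventually (\<lambda>i. g (u i) \<le> c) F \<longrightarrow> g v \<le> c)"

definition halfspace_adherent_map ::
    "('i \<Rightarrow> 'a::real_normed_vector \<Rightarrow> 'a) \<Rightarrow> 'i filter \<Rightarrow> ('a \<Rightarrow> 'a) \<Rightarrow> bool" where
  "halfspace_adherent_map f F q \<longleftrightarrow>
     (\<forall>x y (g1::'a \<Rightarrow>\<^sub>L real) (g2::'a \<Rightarrow>\<^sub>L real) c.
        eventually (\<lambda>i. g1 (f i x) + g2 (f i y) \<le> c) F \<longrightarrow> g1 (q x) + g2 (q y) \<le> c)"

lemma halfspace_adherent_map_diff:
  fixes f :: "'i \<Rightarrow> 'a::real_normed_vector \<Rightarrow> 'a"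
  assumes adh: "halfspace_adherent_map f F q"
  shows "halfspace_adherent (\<lambda>i. f i x - f i y) F (q x - q y)"
  unfolding halfspace_adherent_def
proof (intro allI impI)
  fix g :: "'a \<Rightarrow>\<^sub>L real" and c
  assume "eventually (\<lambda>i. g (f i x - f i y) \<le> c) F"
  then have "eventually (\<lambda>i. g (f i x) + (- g) (f i y) \<le> c) F"
    by (simp add: blinfun.diff_right blinfun.minus_left)
  then have "g (q x) + (- g) (q y) \<le> c"
    using adh unfolding halfspace_adherent_map_def by blast
  then show "g (q x - q y) \<le> c" by (simp add: blinfun.diff_right blinfun.minus_left)
qed

lemma halfspace_adherent_map_point:
  fixes f :: "'i \<Rightarrow> 'a::real_normed_vector \<Rightarrow> 'a"
  assumes adh: "halfspace_adherent_map f F q"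
  shows "halfspace_adherent (\<lambda>i. f i x) F (q x)"
  unfolding halfspace_adherent_def
proof (intro allI impI)
  fix g :: "'a \<Rightarrow>\<^sub>L real" and c
  assume "eventually (\<lambda>i. g (f i x) \<le> c) F"
  then have "eventually (\<lambda>i. g (f i x) + (0::'a \<Rightarrow>\<^sub>L real) (f i x) \<le> c) F" by simp
  then have "g (q x) + (0::'a \<Rightarrow>\<^sub>L real) (q x) \<le> c"
    using adh unfolding halfspace_adherent_map_def by blast
  then show "g (q x) \<le> c" by simp
qed

lemma halfspace_adherent_sublinear_le:
  fixes p :: "'a::real_normed_vector \<Rightarrow> real"
  assumes adh: "halfspace_adherent u F v" and p: "sublinear p" "\<And>x. p x \<le> B * norm x"
    and ev: "eventually (\<lambda>i. p (u i - z) \<le> c) F"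
  shows "p (v - z) \<le> c"
proof -
  obtain g :: "'a \<Rightarrow>\<^sub>L real" where g: "\<And>x. g x \<le> p x" "g (v - z) = p (v - z)"
    using Hahn_Banach_norming[OF p] by blast
  have "eventually (\<lambda>i. g (u i) \<le> c + g z) F"
    using ev by (rule eventually_mono) (metis g(1) blinfun.diff_right diff_le_eq order_trans)
  then have "g v \<le> c + g z" using adh unfolding halfspace_adherent_def by blast
  then show ?thesis using g(2) by (simp add: blinfun.diff_right)
qed

lemma halfspace_adherent_mem:
  fixes S :: "'a::real_normed_vector set"
  assumes adh: "halfspace_adherent u F v" and S: "convex S" "closed S"
    and ev: "eventually (\<lambda>i. u i \<in> S) F"
  shows "v \<in> S"
proof (rule ccontr)
  assume v: "v \<notin> S"
  show False
  proof (cases "S = {}")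
    case True
    then have "eventually (\<lambda>i. (0::'a \<Rightarrow>\<^sub>L real) (u i) \<le> -1) F" using ev by simp
    then show False using adh unfolding halfspace_adherent_def by fastforce
  next
    case False
    then obtain g :: "'a \<Rightarrow>\<^sub>L real" and d where "d > 0" and sep: "\<And>y. y \<in> S \<Longrightarrow> g y \<le> g v - d"
      using Hahn_Banach_separation[OF S _ v] by blast
    have "eventually (\<lambda>i. g (u i) \<le> g v - d) F" using ev by (rule eventually_mono) (rule sep)
    then have "g v \<le> g v - d" using adh unfolding halfspace_adherent_def by blast
    then show False using \<open>d > 0\<close> by simp
  qed
qed

lemma reflexive_space_evaluation:
  fixes \<phi> :: "('a::banach \<Rightarrow>\<^sub>L real) \<Rightarrow> real"
  assumes "reflexive_space TYPE('a)" and "bounded_linear \<phi>"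
  shows "\<exists>y. \<forall>g. \<phi> g = g y"
  using assms(1)[unfolded reflexive_space_def, rule_format, of "Blinfun \<phi>"]
  by (simp add: bounded_linear_Blinfun_apply[OF assms(2)])

lemma bounded_linear_cluster_of_pairings:
  fixes f :: "'i \<Rightarrow> 'a::real_normed_vector \<Rightarrow> 'a" and \<Phi> :: "'a \<times> ('a \<Rightarrow>\<^sub>L real) \<Rightarrow> real"
  assumes closed_mem: "\<And>S. closed S \<Longrightarrow> eventually (\<lambda>i. (\<lambda>(x, g). blinfun_apply g (f i x)) \<in> S) F \<Longrightarrow> \<Phi> \<in> S"
    and bound: "\<And>g. \<bar>\<Phi> (x, g)\<bar> \<le> B * norm g"
  shows "bounded_linear (\<lambda>g. \<Phi> (x, g))"
proof (rule bounded_linear_intro[where K = B])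
  fix g1 g2
  have "\<Phi> \<in> {\<Psi>. \<Psi> (x, g1 + g2) = \<Psi> (x, g1) + \<Psi> (x, g2)}"
    by (rule closed_mem) (auto intro!: closed_Collect_eq continuous_intros simp: blinfun.add_left)
  then show "\<Phi> (x, g1 + g2) = \<Phi> (x, g1) + \<Phi> (x, g2)" by simp
next
  fix r g
  have "\<Phi> \<in> {\<Psi>. \<Psi> (x, r *\<^sub>R g) = r * \<Psi> (x, g)}"
    by (rule closed_mem) (auto intro!: closed_Collect_eq continuous_intros simp: blinfun.scaleR_left)
  then show "\<Phi> (x, r *\<^sub>R g) = r *\<^sub>R \<Phi> (x, g)" by simp
next
  fix g show "norm (\<Phi> (x, g)) \<le> norm g * B" using bound[of g] by (simp add: mult.commute)
qed

text \<open>The pairings \<open>(x, g) \<mapsto> g (f i x)\<close> have a cluster point \<open>\<Phi>\<close> in a Tychonoff box; each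
  \<open>\<Phi> (x, -)\<close> lies in the bidual, so by reflexivity it is evaluation at some point \<open>q x\<close>.\<close>
lemma reflexive_halfspace_adherent_map:
  fixes f :: "'i \<Rightarrow> 'a::banach \<Rightarrow> 'a"
  assumes refl: "reflexive_space TYPE('a)" and F: "F \<noteq> bot"
    and bounded: "eventually (\<lambda>i. \<forall>x. norm (f i x) \<le> B x) F"
  shows "\<exists>q. halfspace_adherent_map f F q"
proof -
  define \<phi> where "\<phi> i = (\<lambda>(x, g::'a \<Rightarrow>\<^sub>L real). g (f i x))" for i
  define M where "M = (\<lambda>(x, g::'a \<Rightarrow>\<^sub>L real). B x * norm g)"
  have "eventually (\<lambda>i. \<forall>b. \<bar>\<phi> i b\<bar> \<le> M b) F"
    using bounded
  proof (rule eventually_mono, clarify)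
    fix i x and g :: "'a \<Rightarrow>\<^sub>L real" assume "\<forall>x. norm (f i x) \<le> B x"
    then have "norm g * norm (f i x) \<le> norm g * B x" by (simp add: mult_left_mono)
    then show "\<bar>\<phi> i (x, g)\<bar> \<le> M (x, g)"
      unfolding \<phi>_def M_def using norm_blinfun[of g "f i x"] by (simp add: mult.commute)
  qed
  then obtain \<Phi> where \<Phi>: "\<And>x g. \<bar>\<Phi> (x, g)\<bar> \<le> B x * norm g"
    and closed_mem: "\<And>S. closed S \<Longrightarrow> eventually (\<lambda>i. \<phi> i \<in> S) F \<Longrightarrow> \<Phi> \<in> S"
    using bounded_functions_cluster[OF F] unfolding M_def by fastforce
  have "\<exists>y. \<forall>g. \<Phi> (x, g) = blinfun_apply g y" for x
    using reflexive_space_evaluation[OF refl bounded_linear_cluster_of_pairings] closed_mem \<Phi>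
    unfolding \<phi>_def by blast
  then obtain q where q: "\<And>x g. \<Phi> (x, g) = blinfun_apply g (q x)" by metis
  have "halfspace_adherent_map f F q"
    unfolding halfspace_adherent_map_def
  proof (intro allI impI)
    fix x y :: 'a and g1 g2 :: "'a \<Rightarrow>\<^sub>L real" and c
    assume "eventually (\<lambda>i. g1 (f i x) + g2 (f i y) \<le> c) F"
    then have "\<Phi> \<in> {\<Psi>. \<Psi> (x, g1) + \<Psi> (y, g2) \<le> c}"
      by (intro closed_mem) (auto intro!: closed_Collect_le continuous_intros elim!: eventually_mono simp: \<phi>_def)
    then show "g1 (q x) + g2 (q y) \<le> c" by (simp add: q)
  qed
  then show ?thesis by blast
qed

lemma halfspace_adherent_map_fixes:
  assumes q: "halfspace_adherent_map f F q" and "eventually (\<lambda>i. f i x = x) F"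
  shows "q x = x"
  using halfspace_adherent_mem[OF halfspace_adherent_map_point[OF q], of "{x}"] assms(2)
  by (auto elim: eventually_mono)

lemma halfspace_adherent_map_nonexpansive:
  fixes f :: "'i \<Rightarrow> 'a::real_normed_vector \<Rightarrow> 'a"
  assumes q: "halfspace_adherent_map f F q" and N: "is_norm N" "\<And>x. N x \<le> B * norm x"
    and L: "(L \<longlongrightarrow> 1) F"
    and lipschitz: "eventually (\<lambda>i. \<forall>x y. N (f i x - f i y) \<le> L i * N (x - y)) F"
  shows "N (q x - q y) \<le> N (x - y)"
proof (rule tendsto_le[OF trivial_limit_at_right_real])
  show "((\<lambda>e. (1 + e) * N (x - y)) \<longlongrightarrow> N (x - y)) (at_right 0)"
    by (auto intro!: tendsto_eq_intros)
  have "N (q x - q y) \<le> (1 + e) * N (x - y)" if "e > 0" for e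
  proof (rule halfspace_adherent_sublinear_le[OF halfspace_adherent_map_diff[OF q] is_norm_sublinear[OF N(1)]
        N(2), where z = 0, simplified])
    have "eventually (\<lambda>i. L i < 1 + e) F" using order_tendstoD(2)[OF L] that by simp
    then show "eventually (\<lambda>i. N (f i x - f i y) \<le> (1 + e) * N (x - y)) F"
      using lipschitz
      by eventually_elim (meson less_imp_le mult_right_mono is_norm_nonneg[OF N(1)] order_trans)
  qed
  then show "eventually (\<lambda>e. N (q x - q y) \<le> (1 + e) * N (x - y)) (at_right 0)"
    by (rule eventually_mono[OF eventually_at_right_less[of 0]])
qed simp

section \<open>Intersections of contractive sets for a strictly convex norm\<close>

definition nonexpansive :: "('a::real_vector \<Rightarrow> real) \<Rightarrow> ('a \<Rightarrow> 'a) \<Rightarrow> bool" where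
  "nonexpansive N f \<longleftrightarrow> (\<forall>x y. N (f x - f y) \<le> N (x - y))"

lemma contractive_set_iff:
  "contractive_set N D \<longleftrightarrow> D \<noteq> {} \<and> (\<exists>P. (\<forall>x. P x \<in> D) \<and> (\<forall>x\<in>D. P x = x) \<and> nonexpansive N P)"
  unfolding contractive_set_def nonexpansive_def ..

lemma is_norm_midpoint_le: "is_norm N \<Longrightarrow> N (midpoint a b) \<le> (N a + N b) / 2"
  using sublinear_add[OF is_norm_sublinear, of N a b] is_norm_scaleR[of N "inverse 2" "a + b"]
  by (simp add: midpoint_def)

lemma midpoint_diff: "midpoint a b - midpoint c d = midpoint (a - c) (b - d)"
  by (simp add: midpoint_def algebra_simps)

lemma strictly_convex_norm_midpoint_eq:
  assumes sc: "strictly_convex_norm N" and le: "N b \<le> N a" and eq: "N (midpoint a b) = N a"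
  shows "a = b"
proof -
  have N: "is_norm N" using sc unfolding strictly_convex_norm_def by blast
  have "N a \<le> (N a + N b) / 2" using eq is_norm_midpoint_le[OF N, of a b] by simp
  then have Nb: "N b = N a" using le by simp
  show ?thesis
  proof (cases "N a = 0")
    case True
    then show ?thesis using Nb N unfolding is_norm_def by metis
  next
    case False
    then have r: "N a > 0" using is_norm_nonneg[OF N, of a] by simp
    show ?thesis
    proof (rule ccontr)
      assume "a \<noteq> b"
      then have "(1 / N a) *\<^sub>R a \<noteq> (1 / N a) *\<^sub>R b" using r by simp
      moreover have "N ((1 / N a) *\<^sub>R a) = 1" "N ((1 / N a) *\<^sub>R b) = 1"
        using r Nb is_norm_scaleR[OF N] by auto
      ultimately have "N ((1/2) *\<^sub>R ((1 / N a) *\<^sub>R a + (1 / N a) *\<^sub>R b)) < 1"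
        using sc unfolding strictly_convex_norm_def by blast
      moreover have "(1/2) *\<^sub>R ((1 / N a) *\<^sub>R a + (1 / N a) *\<^sub>R b) = (1 / N a) *\<^sub>R midpoint a b"
        by (simp add: midpoint_def scaleR_add_right mult.commute)
      ultimately show False using eq r is_norm_scaleR[OF N] by simp
    qed
  qed
qed

lemma norm_le_of_nonexpansive_fixing:
  assumes N_le: "\<And>x. N x \<le> C * norm x" and norm_le: "\<And>x. norm x \<le> C * N x" and "C \<ge> 0"
    and f: "nonexpansive N f" "f p = p"
  shows "norm (f x) \<le> norm p + C * C * norm (x - p)"
proof -
  have "norm (f x - p) \<le> C * N (f x - f p)" using norm_le[of "f x - p"] f(2) by simp
  also have "\<dots> \<le> C * N (x - p)" using f(1) \<open>C \<ge> 0\<close> unfolding nonexpansive_def by (simp add: mult_left_mono)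
  also have "\<dots> \<le> C * (C * norm (x - p))" using N_le \<open>C \<ge> 0\<close> by (simp add: mult_left_mono)
  finally show ?thesis using norm_triangle_ineq[of "f x - p" p] by simp
qed

lemma filter_below_chain:
  fixes v :: "'a \<Rightarrow> 'b::order"
  assumes A: "A \<noteq> {}" and chain: "Complete_Partial_Order.chain (\<le>) (v ` A)"
  shows "\<exists>F. F \<noteq> bot \<and> (\<forall>a\<in>A. eventually (\<lambda>b. b \<in> A \<and> v b \<le> v a) F)"
proof -
  define S where "S a = {b \<in> A. v b \<le> v a}" for a
  define F where "F = (INF a\<in>A. principal (S a))"
  have "eventually P F \<longleftrightarrow> (\<exists>a\<in>A. eventually P (principal (S a)))" for P
    unfolding F_def
  proof (rule eventually_INF_base[OF A])
    fix a b assume "a \<in> A" "b \<in> A"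
    then have "v a \<le> v b \<or> v b \<le> v a" using chain by (auto simp: chain_def)
    then have "S a \<subseteq> S a \<inter> S b \<or> S b \<subseteq> S a \<inter> S b" unfolding S_def by (auto intro: order_trans)
    then show "\<exists>c\<in>A. principal (S c) \<le> inf (principal (S a)) (principal (S b))"
      using \<open>a \<in> A\<close> \<open>b \<in> A\<close> by auto
  qed
  then have "F \<noteq> bot" and "\<forall>a\<in>A. eventually (\<lambda>b. b \<in> S a) F"
    by (auto simp: trivial_limit_def eventually_principal S_def)
  then show ?thesis unfolding S_def mem_Collect_eq by blast
qed

lemma nonexpansive_fixing_chain_lower_bound:
  fixes N :: "'a::banach \<Rightarrow> real"
  assumes refl: "reflexive_space TYPE('a)" and N: "is_norm N"
    and N_le: "\<And>x. N x \<le> C * norm x" and norm_le: "\<And>x. norm x \<le> C * N x" and "C \<ge> 0"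
    and "p \<in> D"
    and A: "A \<noteq> {}" "\<And>f. f \<in> A \<Longrightarrow> (\<forall>x\<in>D. f x = x) \<and> nonexpansive N f"
    and chain: "Complete_Partial_Order.chain (\<le>) ((\<lambda>f x. N (f x - p)) ` A)"
  shows "\<exists>q. (\<forall>x\<in>D. q x = x) \<and> nonexpansive N q \<and> (\<forall>f\<in>A. \<forall>x. N (q x - p) \<le> N (f x - p))"
proof -
  obtain F where F: "F \<noteq> bot"
    and below: "\<And>f. f \<in> A \<Longrightarrow> eventually (\<lambda>g. g \<in> A \<and> (\<lambda>x. N (g x - p)) \<le> (\<lambda>x. N (f x - p))) F"
    using filter_below_chain[OF A(1) chain] by blast
  obtain f0 where "f0 \<in> A" using A(1) by blast
  have in_A: "eventually (\<lambda>g. g \<in> A) F"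
    using below[OF \<open>f0 \<in> A\<close>] by (rule eventually_mono) simp
  have "eventually (\<lambda>g. \<forall>x. norm (g x) \<le> norm p + C * C * norm (x - p)) F"
    using in_A by (rule eventually_mono)
      (use norm_le_of_nonexpansive_fixing[OF N_le norm_le \<open>C \<ge> 0\<close>] \<open>p \<in> D\<close> A(2) in blast)
  then obtain q where q: "halfspace_adherent_map (\<lambda>g. g) F q"
    using reflexive_halfspace_adherent_map[OF refl F, of "\<lambda>g. g" "\<lambda>x. norm p + C * C * norm (x - p)"]
    by blast
  have "q x = x" if "x \<in> D" for x
    by (rule halfspace_adherent_map_fixes[OF q eventually_mono[OF in_A]]) (use that A(2) in blast)
  moreover have "N (q x - q y) \<le> N (x - y)" for x y
    by (rule halfspace_adherent_map_nonexpansive[OF q N N_le tendsto_const eventually_mono[OF in_A]])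
      (use A(2) in \<open>simp add: nonexpansive_def\<close>)
  moreover have "N (q x - p) \<le> N (f x - p)" if "f \<in> A" for f x
    using halfspace_adherent_sublinear_le[OF halfspace_adherent_map_point[OF q] is_norm_sublinear[OF N] N_le]
      below[OF that] by (simp add: le_fun_def eventually_mono)
  ultimately show ?thesis unfolding nonexpansive_def by blast
qed

lemma exists_minimal_nonexpansive_fixing:
  fixes N :: "'a::banach \<Rightarrow> real"
  assumes refl: "reflexive_space TYPE('a)" and N: "is_norm N"
    and N_le: "\<And>x. N x \<le> C * norm x" and norm_le: "\<And>x. norm x \<le> C * N x" and "C \<ge> 0"
    and "p \<in> D"
  obtains f where "\<forall>x\<in>D. f x = x" "nonexpansive N f"
    "\<And>g. \<forall>x\<in>D. g x = x \<Longrightarrow> nonexpansive N g \<Longrightarrow> (\<lambda>x. N (g x - p)) \<le> (\<lambda>x. N (f x - p))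
       \<Longrightarrow> (\<lambda>x. N (g x - p)) = (\<lambda>x. N (f x - p))"
proof -
  define G where "G = {f. (\<forall>x\<in>D. f x = x) \<and> nonexpansive N f}"
  define v :: "('a \<Rightarrow> 'a) \<Rightarrow> 'a \<Rightarrow> real" where "v = (\<lambda>f x. N (f x - p))"
  have "\<exists>m\<in>v ` G. \<forall>a\<in>v ` G. a \<le> m \<longrightarrow> a = m"
  proof (rule Zorn_minimal)
    have "id \<in> G" unfolding G_def nonexpansive_def by simp
    then show "v ` G \<noteq> {}" by blast
  next
    fix V assume V: "V \<subseteq> v ` G" "V \<noteq> {}" "Complete_Partial_Order.chain (\<le>) V"
    define A where "A = {f \<in> G. v f \<in> V}"
    have "v ` A = V" using V(1) unfolding A_def by blast
    moreover have "A \<noteq> {}" using V(1,2) unfolding A_def by blast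
    moreover have "\<And>f. f \<in> A \<Longrightarrow> (\<forall>x\<in>D. f x = x) \<and> nonexpansive N f" unfolding A_def G_def by blast
    ultimately obtain q where "(\<forall>x\<in>D. q x = x) \<and> nonexpansive N q" and "\<forall>f\<in>A. \<forall>x. v q x \<le> v f x"
      using nonexpansive_fixing_chain_lower_bound[OF refl N N_le norm_le \<open>C \<ge> 0\<close> \<open>p \<in> D\<close>, of A] V(3)
      unfolding v_def by blast
    then show "\<exists>u\<in>v ` G. \<forall>a\<in>V. u \<le> a" using \<open>v ` A = V\<close> unfolding G_def le_fun_def by blast
  qed
  then obtain f where "f \<in> G" and "\<And>g. g \<in> G \<Longrightarrow> v g \<le> v f \<Longrightarrow> v g = v f" by blast
  then show ?thesis using that unfolding G_def v_def by blast
qed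

text \<open>The average of \<open>f\<close> and \<open>P \<circ> f\<close> is again admissible, with no larger displacement from \<open>p\<close>;
  so by minimality the displacements agree, and strict convexity forces \<open>P \<circ> f = f\<close>.\<close>
lemma minimal_nonexpansive_fixing_maps_into:
  assumes sc: "strictly_convex_norm N" and "p \<in> D"
    and f: "\<forall>x\<in>D. f x = x" "nonexpansive N f"
    and minimal: "\<And>g. \<forall>x\<in>D. g x = x \<Longrightarrow> nonexpansive N g \<Longrightarrow> (\<lambda>x. N (g x - p)) \<le> (\<lambda>x. N (f x - p))
       \<Longrightarrow> (\<lambda>x. N (g x - p)) = (\<lambda>x. N (f x - p))"
    and P: "\<And>x. P x \<in> E" "\<And>x. x \<in> E \<Longrightarrow> P x = x" "nonexpansive N P" and "D \<subseteq> E"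
  shows "f x \<in> E"
proof -
  have N: "is_norm N" using sc unfolding strictly_convex_norm_def by blast
  define h where "h z = midpoint (f z) (P (f z))" for z
  have Pp: "P p = p" using P(2) \<open>p \<in> D\<close> \<open>D \<subseteq> E\<close> by blast
  have h_le: "N (h z - h w) \<le> N (f z - f w)" for z w
  proof -
    have "N (h z - h w) \<le> (N (f z - f w) + N (P (f z) - P (f w))) / 2"
      unfolding h_def midpoint_diff by (rule is_norm_midpoint_le[OF N])
    also have "\<dots> \<le> N (f z - f w)" using P(3) unfolding nonexpansive_def by (simp add: field_simps)
    finally show ?thesis .
  qed
  have "\<forall>x\<in>D. h x = x" using f(1) P(2) \<open>D \<subseteq> E\<close> unfolding h_def by auto
  moreover have "nonexpansive N h"
    using f(2) h_le unfolding nonexpansive_def by (blast intro: order_trans)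
  moreover have "(\<lambda>x. N (h x - p)) \<le> (\<lambda>x. N (f x - p))"
    using h_le f(1) \<open>p \<in> D\<close> by (metis le_funI Pp h_def midpoint_idem)
  ultimately have "N (h x - p) = N (f x - p)" using minimal by metis
  then have "N (midpoint (f x - p) (P (f x) - P p)) = N (f x - p)"
    unfolding h_def Pp by (metis midpoint_diff midpoint_idem)
  moreover have "N (P (f x) - P p) \<le> N (f x - p)" using P(3) unfolding nonexpansive_def by blast
  ultimately have "f x - p = P (f x) - P p" by (rule strictly_convex_norm_midpoint_eq[OF sc, rotated])
  then show ?thesis using P(1)[of "f x"] Pp by simp
qed

lemma strictly_convex_contractive_Inter:
  fixes N :: "'a::banach \<Rightarrow> real"
  assumes refl: "reflexive_space TYPE('a)" and sc: "strictly_convex_norm N"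
    and N_le: "\<And>x. N x \<le> C * norm x" and norm_le: "\<And>x. norm x \<le> C * N x" and "C \<ge> 0"
    and contractive: "\<And>D. D \<in> \<D> \<Longrightarrow> contractive_set N D" and "\<Inter>\<D> \<noteq> {}"
  shows "contractive_set N (\<Inter>\<D>)"
proof -
  have N: "is_norm N" using sc unfolding strictly_convex_norm_def by blast
  obtain p where "p \<in> \<Inter>\<D>" using \<open>\<Inter>\<D> \<noteq> {}\<close> by blast
  obtain f where f: "\<forall>x\<in>\<Inter>\<D>. f x = x" "nonexpansive N f"
    and minimal: "\<And>g. \<forall>x\<in>\<Inter>\<D>. g x = x \<Longrightarrow> nonexpansive N g \<Longrightarrow> (\<lambda>x. N (g x - p)) \<le> (\<lambda>x. N (f x - p))
       \<Longrightarrow> (\<lambda>x. N (g x - p)) = (\<lambda>x. N (f x - p))"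
    using exists_minimal_nonexpansive_fixing[OF refl N N_le norm_le \<open>C \<ge> 0\<close> \<open>p \<in> \<Inter>\<D>\<close>] by blast
  have "f x \<in> D" if D: "D \<in> \<D>" for x D
  proof -
    obtain P where "\<And>x. P x \<in> D" "\<And>x. x \<in> D \<Longrightarrow> P x = x" "nonexpansive N P"
      using contractive[OF D] unfolding contractive_set_iff by blast
    then show ?thesis
      using minimal_nonexpansive_fixing_maps_into[OF sc \<open>p \<in> \<Inter>\<D>\<close> f minimal] D by blast
  qed
  then show ?thesis using f \<open>\<Inter>\<D> \<noteq> {}\<close> unfolding contractive_set_iff by blast
qed

section \<open>Limits of retractions for converging norms\<close>

lemma contractive_set_closed:
  fixes N :: "'a::real_normed_vector \<Rightarrow> real"
  assumes "contractive_set N D" and N_le: "\<And>x. N x \<le> C * norm x" and norm_le: "\<And>x. norm x \<le> C * N x"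
    and "C \<ge> 0"
  shows "closed D"
proof -
  obtain P where P: "\<And>x. P x \<in> D" "\<And>x. x \<in> D \<Longrightarrow> P x = x" "nonexpansive N P"
    using assms(1) unfolding contractive_set_iff by blast
  have "(C * C)-lipschitz_on UNIV P"
  proof (rule lipschitz_onI)
    fix x y
    have "norm (P x - P y) \<le> C * N (P x - P y)" by (rule norm_le)
    also have "\<dots> \<le> C * N (x - y)" using P(3) \<open>C \<ge> 0\<close> unfolding nonexpansive_def by (simp add: mult_left_mono)
    also have "\<dots> \<le> C * (C * norm (x - y))" using N_le \<open>C \<ge> 0\<close> by (simp add: mult_left_mono)
    finally show "dist (P x) (P y) \<le> C * C * dist x y" by (simp add: dist_norm)
  qed (use \<open>C \<ge> 0\<close> in simp)
  then have "closed {x. P x = x}"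
    using closed_Collect_eq[OF lipschitz_on_continuous_on continuous_on_id] by blast
  moreover have "D = {x. P x = x}" using P(1,2) by (metis (mono_tags) mem_Collect_eq subsetI subset_antisym)
  ultimately show ?thesis by simp
qed

lemma norm_bounds_of_perturbation:
  assumes "is_norm N" "0 \<le> s" "s \<le> 1/2" "(1 - s) * N x \<le> norm x" "norm x \<le> (1 + s) * N x"
  shows "N x \<le> 2 * norm x" "norm x \<le> 2 * N x"
proof -
  have "N x \<ge> 0" by (rule is_norm_nonneg[OF assms(1)])
  moreover have "1/2 \<le> 1 - s" "1 + s \<le> 2" using assms(2,3) by linarith+
  ultimately have "(1/2) * N x \<le> (1 - s) * N x" "(1 + s) * N x \<le> 2 * N x"
    using mult_right_mono by blast+
  with assms(4,5) show "N x \<le> 2 * norm x" "norm x \<le> 2 * N x" by linarith+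
qed

lemma norm_diff_le_of_nonexpansive_perturbation:
  assumes Q: "nonexpansive N Q" and s: "0 \<le> s" "s < 1"
    and lower: "\<And>x. (1 - s) * N x \<le> norm x" and upper: "\<And>x. norm x \<le> (1 + s) * N x"
  shows "norm (Q x - Q y) \<le> (1 + s) / (1 - s) * norm (x - y)"
proof -
  have "norm (Q x - Q y) \<le> (1 + s) * N (Q x - Q y)" by (rule upper)
  also have "\<dots> \<le> (1 + s) * N (x - y)" using Q s unfolding nonexpansive_def by (simp add: mult_left_mono)
  also have "\<dots> \<le> (1 + s) * (norm (x - y) / (1 - s))"
    using lower[of "x - y"] s by (intro mult_left_mono) (simp_all add: pos_le_divide_eq mult.commute)
  finally show ?thesis by simp
qed

lemma halfspace_adherent_map_retraction:
  assumes q: "halfspace_adherent_map Q F q" and D: "convex D" "closed D"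
    and retraction: "eventually (\<lambda>i. (\<forall>x. Q i x \<in> D) \<and> (\<forall>x\<in>D. Q i x = x)) F"
  shows "q x \<in> D" and "x \<in> D \<Longrightarrow> q x = x"
proof -
  show "q x \<in> D"
    by (rule halfspace_adherent_mem[OF halfspace_adherent_map_point[OF q] D eventually_mono[OF retraction]])
      blast
  show "q x = x" if "x \<in> D"
    by (rule halfspace_adherent_map_fixes[OF q eventually_mono[OF retraction]]) (use that in blast)
qed

lemma halfspace_adherent_map_nonexpansive_limit:
  assumes q: "halfspace_adherent_map Q F q" and s: "\<And>i. s i \<ge> 0" "(s \<longlongrightarrow> 0) F"
    and equiv: "\<And>i x. (1 - s i) * Ns i x \<le> norm x \<and> norm x \<le> (1 + s i) * Ns i x"
    and nonexpansive: "eventually (\<lambda>i. nonexpansive (Ns i) (Q i)) F"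
  shows "norm (q x - q y) \<le> norm (x - y)"
proof (rule halfspace_adherent_map_nonexpansive[OF q is_norm_norm, where B = 1])
  show "((\<lambda>i. (1 + s i) / (1 - s i)) \<longlongrightarrow> 1) F"
    using s(2) by (auto intro!: tendsto_eq_intros)
  show "eventually (\<lambda>i. \<forall>x y. norm (Q i x - Q i y) \<le> (1 + s i) / (1 - s i) * norm (x - y)) F"
    using order_tendstoD(2)[OF s(2), of 1, simplified] nonexpansive
  proof eventually_elim
    case (elim i)
    then show ?case using norm_diff_le_of_nonexpansive_perturbation[OF _ s(1)] equiv by blast
  qed
qed simp

lemma contractive_set_limit_of_norms:
  fixes Ns :: "'i \<Rightarrow> 'a::banach \<Rightarrow> real"
  assumes refl: "reflexive_space TYPE('a)" and F: "F \<noteq> bot"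
    and N: "\<And>i. is_norm (Ns i)" and s: "\<And>i. s i \<ge> 0" "(s \<longlongrightarrow> 0) F"
    and equiv: "\<And>i x. (1 - s i) * Ns i x \<le> norm x \<and> norm x \<le> (1 + s i) * Ns i x"
    and "convex D" and contractive: "eventually (\<lambda>i. contractive_set (Ns i) D) F"
  shows "contractive_set norm D"
proof -
  define good where "good i \<longleftrightarrow> s i \<le> 1/2 \<and> contractive_set (Ns i) D" for i
  have ev_good: "eventually good F"
    using order_tendstoD(2)[OF s(2), of "1/2", simplified] contractive by eventually_elim (simp add: good_def)
  have bounds: "Ns i x \<le> 2 * norm x" "norm x \<le> 2 * Ns i x" if "good i" for i x
    using norm_bounds_of_perturbation[OF N s(1)] equiv that unfolding good_def by blast+
  have "\<forall>i. \<exists>P. good i \<longrightarrow> (\<forall>x. P x \<in> D) \<and> (\<forall>x\<in>D. P x = x) \<and> nonexpansive (Ns i) P"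
    unfolding good_def contractive_set_iff by blast
  then obtain Q where "\<forall>i. good i \<longrightarrow> (\<forall>x. Q i x \<in> D) \<and> (\<forall>x\<in>D. Q i x = x) \<and> nonexpansive (Ns i) (Q i)"
    by (rule choice[THEN exE])
  then have Q: "\<And>i. good i \<Longrightarrow> (\<forall>x. Q i x \<in> D) \<and> (\<forall>x\<in>D. Q i x = x) \<and> nonexpansive (Ns i) (Q i)"
    by blast
  obtain i0 where "good i0" using eventually_happens'[OF F ev_good] by blast
  then have "closed D" using contractive_set_closed[of "Ns i0" D 2] bounds good_def by auto
  obtain p where "p \<in> D" using \<open>good i0\<close> unfolding good_def contractive_set_def by blast
  have "eventually (\<lambda>i. \<forall>x. norm (Q i x) \<le> norm p + 2 * 2 * norm (x - p)) F"
    using ev_good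
  proof eventually_elim
    case (elim i)
    then show ?case
      using norm_le_of_nonexpansive_fixing[of "Ns i" 2 "Q i" p] bounds[OF elim] Q[OF elim] \<open>p \<in> D\<close>
      by simp
  qed
  then obtain q where q: "halfspace_adherent_map Q F q"
    using reflexive_halfspace_adherent_map[OF refl F] by metis
  have "q x \<in> D" "x \<in> D \<Longrightarrow> q x = x" for x
    using halfspace_adherent_map_retraction[OF q \<open>convex D\<close> \<open>closed D\<close>] ev_good Q
    by (blast intro: eventually_mono)+
  moreover have "norm (q x - q y) \<le> norm (x - y)" for x y
    using halfspace_adherent_map_nonexpansive_limit[OF q s equiv] ev_good Q by (blast intro: eventually_mono)
  ultimately show ?thesis using \<open>p \<in> D\<close> unfolding contractive_set_iff nonexpansive_def by blast
qed

theorem theorem17: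
  fixes Ns :: "nat \<Rightarrow> 'a::banach \<Rightarrow> real"
    and s :: "nat \<Rightarrow> real"
    and Fs :: "nat \<Rightarrow> 'a set"
  assumes "reflexive_space TYPE('a)"
    and "\<And>n. strictly_convex_norm (Ns n)"
    and "\<And>n. s n \<ge> 0"
    and "s \<longlonglongrightarrow> 0"
    and "\<And>n x. (1 - s n) * Ns n x \<le> norm x \<and> norm x \<le> (1 + s n) * Ns n x"
    and "\<And>k. convex (Fs k)"
    and "\<And>k n. contractive_set (Ns n) (Fs k)"
    and "(\<Inter>k. Fs k) \<noteq> {}"
  shows "contractive_set norm (\<Inter>k. Fs k)"
proof -
  have N: "is_norm (Ns n)" for n using assms(2) unfolding strictly_convex_norm_def by blast
  have "eventually (\<lambda>n. contractive_set (Ns n) (\<Inter>k. Fs k)) sequentially"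
    using order_tendstoD(2)[OF assms(4), of "1/2", simplified]
  proof eventually_elim
    case (elim n)
    then have bounds: "Ns n x \<le> 2 * norm x" "norm x \<le> 2 * Ns n x" for x
      using norm_bounds_of_perturbation[OF N[of n] assms(3)[of n]] assms(5)[of n x] by simp_all
    show ?case
      by (rule strictly_convex_contractive_Inter[OF assms(1) assms(2)[of n] bounds])
        (use assms(7,8) in auto)
  qed
  moreover have "convex (\<Inter>k. Fs k)" using assms(6) by (simp add: convex_INT)
  ultimately show ?thesis
    using contractive_set_limit_of_norms[OF assms(1) sequentially_bot N assms(3,4,5)] by blast
qed

end
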